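(* Let $\mathcal M=(R,D,C)$ be a $\lambda\mu$-model in the category of $\omega$-algebraic lattices. If $\Gamma\vdash T:\sigma\mid\Delta$ is derivable in the intersection type assignment system, then $\models_{\mathcal M}\Gamma\vdash T:\sigma\mid\Delta$, for any term or command $T$.
   Context: $\lambda\mu$ terms and commands: $M::=x\mid\lambda x.M\mid MN\mid\mu\alpha.\mathsf C$ and $\mathsf C::=[\alpha]M$. $\lambda\mu$-model. In the category of $\omega$-algebraic lattices (Scott-continuous maps), $(R,D,C)$ is a $\lambda\mu$-model if $D=[C\to R]$ and $C=D\times C$ (up to isomorphism). Environments $e$ map term variables into $D$ and names into $C$. The interpretation is: - $[\![x]\!]e\,k=e(x)k$; - $[\![\lambda x.M]\!]e\langle d,k'\rangle=[\![M]\!](e[x\to d])k'$; - $[\![MN]\!]e\,k=[\![M]\!]e\langle[\![N]\!]e,k\rangle$; - $[\![\mu\alpha.\mathsf C]\!]e\,k=d\,k'$, where $\langle d,k'\rangle=[\![\mathsf C]\!](e[\alpha\to k])$; - $[\![[\alpha]M]\!]e=\langle[\![M]\!]e,e(\alpha)\rangle\in C$. Types. With $\mathcal K(R)$ the compact elements of $R$: - $\Lambda_R$: $\rho::=\psi_a\mid\omega\mid\rho\wedge\rho$ ($a\in\mathcal K(R)$). - $\Lambda_D$: $\delta::=\rho\mid\kappa\to\rho\mid\omega\mid\delta\wedge\delta$. - $\Lambda_C$: $\kappa::=\delta\times\kappa\mid\omega\mid\kappa\wedge\kappa$. The relations $\le_R,\le_D,\le_C$ are the least reflexive, transitive relations with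 $\sigma\wedge\tau\le\sigma,\tau$, $\sigma\le\omega$, $\rho\le\sigma,\tau\Rightarrow\rho\le\sigma\wedge\tau$, and additionally: - $\psi_\bot\sim\omega$ and $\psi_{a\sqcup b}\sim\psi_a\wedge\psi_b$; - if $\rho_1\le_R\rho_2$ then $\rho_1\le_D\rho_2$; - $\omega\le_D\omega\to\omega$; - $\psi_a\le_D\omega\to\psi_a\le_D\psi_a$; - $\omega\le_C\omega\times\omega$; - $(\kappa\to\rho_1)\wedge(\kappa\to\rho_2)\le_D\kappa\to(\rho_1\wedge\rho_2)$; - $(\delta_1\times\kappa_1)\wedge(\delta_2\times\kappa_2)\le_C(\delta_1\wedge\delta_2)\times(\kappa_1\wedge\kappa_2)$; - $\to$ is contravariant in $\Lambda_C$ and covariant in $\Lambda_R$; - $\times$ is covariant in both arguments. Type assignment. A basis $\Gamma$ is a finite map from variables to $\Lambda_D$, and a context $\Delta$ is a finite map from names to $\Lambda_C$. $\Gamma(x)$ and $\Delta(\alpha)$ are $\omega$ outside the domain. The rules are: - (Ax) $\Gamma,x{:}\delta\vdash x:\delta\mid\Delta$. - (Abs) From $\Gamma\vdash M:\kappa\to\rho\mid\Delta$, $\Gamma(x)=\delta$, infer $\Gamma\setminus x\vdash\lambda x.M:(\delta\times\kappa)\to\rho\mid\Delta$. - (App) From $\Gamma\vdash M:(\delta\times\kappa)\to\rho\mid\Delta$ and $\Gamma\vdash N:\delta\mid\Delta$, infer $\Gamma\vdash MN:\kappa\to\rho\mid\Delta$. - (Cmd) From $\Gamma\vdash M:\delta\mid\Delta$,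 $\Delta(\alpha)=\kappa$, infer $\Gamma\vdash[\alpha]M:\delta\times\kappa\mid\Delta$. - ($\mu$) From $\Gamma\vdash\mathsf C:(\kappa'\to\rho)\times\kappa'\mid\Delta$, $\Delta(\alpha)=\kappa$, infer $\Gamma\vdash\mu\alpha.\mathsf C:\kappa\to\rho\mid\Delta\setminus\alpha$. - ($\wedge$), ($\omega$) (every $T$ gets $\omega$), and ($\le$) (subsumption via $\le_D$ or $\le_C$). Type interpretation in $\mathcal M$: - $[\![\psi_a]\!]^R=\{r\in R\mid a\sqsubseteq r\}$; - $[\![\delta\times\kappa]\!]^C=[\![\delta]\!]^D\times[\![\kappa]\!]^C$; - $[\![\kappa\to\rho]\!]^D=\{d\in D\mid\forall k\in[\![\kappa]\!]^C:\ d\,k\in[\![\rho]\!]^R\}$; - $[\![\psi_a]\!]^D=\{d\in D\mid\forall k\in C:\ d\,k\in[\![\psi_a]\!]^R\}$; - $[\![\omega]\!]^A=A$ and $[\![\sigma\wedge\tau]\!]^A=[\![\sigma]\!]^A\cap[\![\tau]\!]^A$. Satisfiability: - $e\models\Gamma;\Delta$ iff $e(x)\in[\![\Gamma(x)]\!]^D$ for all $x$ and $e(\alpha)\in[\![\Delta(\alpha)]\!]^C$ for all $\alpha$; - $\models_{\mathcal M}\Gamma\vdash M:\delta\mid\Delta$ iff for all $e$ with $e\models\Gamma;\Delta$, $[\![M]\!]e\in[\![\delta]\!]^D$; - likewise for commands, with $[\![\mathsf C]\!]e\in[\![\kappa]\!]^C$. *)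

theory Defs
  imports Main "HOL-Library.Countable_Set" "HOL-Library.Product_Order"
begin

definition directed :: "'a::complete_lattice set \<Rightarrow> bool" where
  "directed S \<longleftrightarrow> S \<noteq> {} \<and> (\<forall>x\<in>S. \<forall>y\<in>S. \<exists>z\<in>S. x \<le> z \<and> y \<le> z)"

definition scott_cont :: "('a::complete_lattice \<Rightarrow> 'b::complete_lattice) \<Rightarrow> bool" where
  "scott_cont f \<longleftrightarrow> (\<forall>S. directed S \<longrightarrow> f (Sup S) = Sup (f ` S))"

text \<open>Scott continuity of a map defined on a sub-lattice closed under directed sups
  (used for the inverse of the isomorphism onto the function space [C -> R]).\<close>
definition scott_cont_on :: "'a::complete_lattice set \<Rightarrow> ('a \<Rightarrow> 'b::complete_lattice) \<Rightarrow> bool" where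
  "scott_cont_on A f \<longleftrightarrow> (\<forall>S. S \<subseteq> A \<longrightarrow> directed S \<longrightarrow> f (Sup S) = Sup (f ` S))"

definition compact_el :: "'a::complete_lattice \<Rightarrow> bool" where
  "compact_el a \<longleftrightarrow> (\<forall>S. directed S \<longrightarrow> a \<le> Sup S \<longrightarrow> (\<exists>s\<in>S. a \<le> s))"

definition omega_algebraic :: "'a::complete_lattice itself \<Rightarrow> bool" where
  "omega_algebraic _ \<longleftrightarrow>
     countable {a::'a. compact_el a} \<and> (\<forall>x::'a. x = Sup {a. compact_el a \<and> a \<le> x})"

typedef (overloaded) ('r::complete_lattice) kel = "{a::'r. compact_el a}"
  by (rule exI[of _ bot]) (auto simp: compact_el_def directed_def)

text \<open>A lambda-mu model (R,D,C): all three are omega-algebraic lattices,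
  app : D -> [C -> R] is an isomorphism (Scott continuous, with Scott continuous
  inverse lam) onto the lattice of Scott continuous functions C -> R (pointwise order),
  and pr : D x C -> C is an isomorphism with inverse unpr.\<close>
definition lm_model ::
  "('d::complete_lattice \<Rightarrow> 'c::complete_lattice \<Rightarrow> 'r::complete_lattice)
   \<Rightarrow> (('c \<Rightarrow> 'r) \<Rightarrow> 'd) \<Rightarrow> ('d \<times> 'c \<Rightarrow> 'c) \<Rightarrow> ('c \<Rightarrow> 'd \<times> 'c) \<Rightarrow> bool" where
  "lm_model app lam pr unpr \<longleftrightarrow>
     omega_algebraic TYPE('r) \<and> omega_algebraic TYPE('d) \<and> omega_algebraic TYPE('c) \<and>
     range app = {f. scott_cont f} \<and>
     (\<forall>d. lam (app d) = d) \<and> (\<forall>f. scott_cont f \<longrightarrow> app (lam f) = f) \<and>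
     scott_cont app \<and> scott_cont_on {f. scott_cont f} lam \<and>
     (\<forall>p. unpr (pr p) = p) \<and> (\<forall>c. pr (unpr c) = c) \<and>
     scott_cont pr \<and> scott_cont unpr"

type_synonym var = nat
type_synonym name = nat

datatype trm = Var var | Lam var trm | App trm trm | Mu name cmd
     and cmd = Cmd name trm

primrec semT :: "('d::complete_lattice \<Rightarrow> 'c::complete_lattice \<Rightarrow> 'r::complete_lattice)
   \<Rightarrow> (('c \<Rightarrow> 'r) \<Rightarrow> 'd) \<Rightarrow> ('d \<times> 'c \<Rightarrow> 'c) \<Rightarrow> ('c \<Rightarrow> 'd \<times> 'c)
   \<Rightarrow> (var \<Rightarrow> 'd) \<Rightarrow> (name \<Rightarrow> 'c) \<Rightarrow> trm \<Rightarrow> 'd"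
and semC :: "('d::complete_lattice \<Rightarrow> 'c::complete_lattice \<Rightarrow> 'r::complete_lattice)
   \<Rightarrow> (('c \<Rightarrow> 'r) \<Rightarrow> 'd) \<Rightarrow> ('d \<times> 'c \<Rightarrow> 'c) \<Rightarrow> ('c \<Rightarrow> 'd \<times> 'c)
   \<Rightarrow> (var \<Rightarrow> 'd) \<Rightarrow> (name \<Rightarrow> 'c) \<Rightarrow> cmd \<Rightarrow> 'c" where
  "semT app lam pr unpr ex ea (Var x) = ex x"
| "semT app lam pr unpr ex ea (Lam x M) =
     lam (\<lambda>k. app (semT app lam pr unpr (ex(x := fst (unpr k))) ea M) (snd (unpr k)))"
| "semT app lam pr unpr ex ea (App M N) =
     lam (\<lambda>k. app (semT app lam pr unpr ex ea M) (pr (semT app lam pr unpr ex ea N, k)))"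
| "semT app lam pr unpr ex ea (Mu \<alpha> c) =
     lam (\<lambda>k. app (fst (unpr (semC app lam pr unpr ex (ea(\<alpha> := k)) c)))
                   (snd (unpr (semC app lam pr unpr ex (ea(\<alpha> := k)) c))))"
| "semC app lam pr unpr ex ea (Cmd \<alpha> M) = pr (semT app lam pr unpr ex ea M, ea \<alpha>)"

text \<open>One syntax for all three sorts (so that Lambda_R is literally a subset of Lambda_D and
  omega / intersection are shared), with sort predicates carving out Lambda_R, Lambda_D, Lambda_C.\<close>
datatype 'k ty = Psi 'k | Om | And "'k ty" "'k ty" | Arr "'k ty" "'k ty" | Times "'k ty" "'k ty"

fun isR :: "'k ty \<Rightarrow> bool" where
  "isR (Psi a) = True"
| "isR Om = True"
| "isR (And s t) = (isR s \<and> isR t)"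
| "isR (Arr k r) = False"
| "isR (Times d k) = False"

fun isD :: "'k ty \<Rightarrow> bool" and isC :: "'k ty \<Rightarrow> bool" where
  "isD (Psi a) = True"
| "isD Om = True"
| "isD (And s t) = (isD s \<and> isD t)"
| "isD (Arr k r) = (isC k \<and> isR r)"
| "isD (Times d k) = False"
| "isC (Psi a) = False"
| "isC Om = True"
| "isC (And s t) = (isC s \<and> isC t)"
| "isC (Arr k r) = False"
| "isC (Times d k) = (isD d \<and> isC k)"

inductive leR :: "'r::complete_lattice kel ty \<Rightarrow> 'r kel ty \<Rightarrow> bool" where
  R_refl: "isR s \<Longrightarrow> leR s s"
| R_trans: "leR s t \<Longrightarrow> leR t u \<Longrightarrow> leR s u"
| R_and1: "isR s \<Longrightarrow> isR t \<Longrightarrow> leR (And s t) s"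
| R_and2: "isR s \<Longrightarrow> isR t \<Longrightarrow> leR (And s t) t"
| R_om: "isR s \<Longrightarrow> leR s Om"
| R_glb: "leR r s \<Longrightarrow> leR r t \<Longrightarrow> leR r (And s t)"
| R_bot1: "Rep_kel a = bot \<Longrightarrow> leR (Psi a) Om"
| R_bot2: "Rep_kel a = bot \<Longrightarrow> leR Om (Psi a)"
| R_sup1: "Rep_kel c = sup (Rep_kel a) (Rep_kel b) \<Longrightarrow> leR (Psi c) (And (Psi a) (Psi b))"
| R_sup2: "Rep_kel c = sup (Rep_kel a) (Rep_kel b) \<Longrightarrow> leR (And (Psi a) (Psi b)) (Psi c)"

inductive leD :: "'r::complete_lattice kel ty \<Rightarrow> 'r kel ty \<Rightarrow> bool"
      and leC :: "'r::complete_lattice kel ty \<Rightarrow> 'r kel ty \<Rightarrow> bool" where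
  D_refl: "isD s \<Longrightarrow> leD s s"
| D_trans: "leD s t \<Longrightarrow> leD t u \<Longrightarrow> leD s u"
| D_and1: "isD s \<Longrightarrow> isD t \<Longrightarrow> leD (And s t) s"
| D_and2: "isD s \<Longrightarrow> isD t \<Longrightarrow> leD (And s t) t"
| D_om: "isD s \<Longrightarrow> leD s Om"
| D_glb: "leD r s \<Longrightarrow> leD r t \<Longrightarrow> leD r (And s t)"
| D_R: "leR r1 r2 \<Longrightarrow> leD r1 r2"
| D_omarr: "leD Om (Arr Om Om)"
| D_psi1: "leD (Psi a) (Arr Om (Psi a))"
| D_psi2: "leD (Arr Om (Psi a)) (Psi a)"
| D_arrand: "isC k \<Longrightarrow> isR r1 \<Longrightarrow> isR r2 \<Longrightarrow>
     leD (And (Arr k r1) (Arr k r2)) (Arr k (And r1 r2))"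
| D_arr: "leC k2 k1 \<Longrightarrow> leR r1 r2 \<Longrightarrow> leD (Arr k1 r1) (Arr k2 r2)"
| C_refl: "isC s \<Longrightarrow> leC s s"
| C_trans: "leC s t \<Longrightarrow> leC t u \<Longrightarrow> leC s u"
| C_and1: "isC s \<Longrightarrow> isC t \<Longrightarrow> leC (And s t) s"
| C_and2: "isC s \<Longrightarrow> isC t \<Longrightarrow> leC (And s t) t"
| C_om: "isC s \<Longrightarrow> leC s Om"
| C_glb: "leC r s \<Longrightarrow> leC r t \<Longrightarrow> leC r (And s t)"
| C_omtimes: "leC Om (Times Om Om)"
| C_timesand: "isD d1 \<Longrightarrow> isD d2 \<Longrightarrow> isC k1 \<Longrightarrow> isC k2 \<Longrightarrow>
     leC (And (Times d1 k1) (Times d2 k2)) (Times (And d1 d2) (And k1 k2))"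
| C_times: "leD d1 d2 \<Longrightarrow> leC k1 k2 \<Longrightarrow> leC (Times d1 k1) (Times d2 k2)"

definition look :: "(nat \<rightharpoonup> 'k ty) \<Rightarrow> nat \<Rightarrow> 'k ty" where
  "look G x = (case G x of None \<Rightarrow> Om | Some t \<Rightarrow> t)"

definition basis :: "(var \<rightharpoonup> 'k ty) \<Rightarrow> bool" where
  "basis G \<longleftrightarrow> finite (dom G) \<and> (\<forall>x t. G x = Some t \<longrightarrow> isD t)"

definition name_context :: "(name \<rightharpoonup> 'k ty) \<Rightarrow> bool" where
  "name_context D \<longleftrightarrow> finite (dom D) \<and> (\<forall>a t. D a = Some t \<longrightarrow> isC t)"

inductive tyT :: "(var \<rightharpoonup> 'r::complete_lattice kel ty) \<Rightarrow> trm \<Rightarrow> 'r kel ty \<Rightarrow> (name \<rightharpoonup> 'r kel ty) \<Rightarrow> bool"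
      and tyC :: "(var \<rightharpoonup> 'r::complete_lattice kel ty) \<Rightarrow> cmd \<Rightarrow> 'r kel ty \<Rightarrow> (name \<rightharpoonup> 'r kel ty) \<Rightarrow> bool"
where
  T_ax: "basis G \<Longrightarrow> name_context Dl \<Longrightarrow> G x = Some d \<Longrightarrow> tyT G (Var x) d Dl"
| T_abs: "tyT G M (Arr k r) Dl \<Longrightarrow> look G x = d \<Longrightarrow>
     tyT (G(x := None)) (Lam x M) (Arr (Times d k) r) Dl"
| T_app: "tyT G M (Arr (Times d k) r) Dl \<Longrightarrow> tyT G N d Dl \<Longrightarrow> tyT G (App M N) (Arr k r) Dl"
| T_mu: "tyC G c (Times (Arr k' r) k') Dl \<Longrightarrow> look Dl \<alpha> = k \<Longrightarrow>
     tyT G (Mu \<alpha> c) (Arr k r) (Dl(\<alpha> := None))"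
| T_and: "tyT G M s Dl \<Longrightarrow> tyT G M t Dl \<Longrightarrow> tyT G M (And s t) Dl"
| T_om: "basis G \<Longrightarrow> name_context Dl \<Longrightarrow> tyT G M Om Dl"
| T_le: "tyT G M s Dl \<Longrightarrow> leD s t \<Longrightarrow> tyT G M t Dl"
| C_cmd: "tyT G M d Dl \<Longrightarrow> look Dl \<alpha> = k \<Longrightarrow> tyC G (Cmd \<alpha> M) (Times d k) Dl"
| C_and: "tyC G c s Dl \<Longrightarrow> tyC G c t Dl \<Longrightarrow> tyC G c (And s t) Dl"
| C_om: "basis G \<Longrightarrow> name_context Dl \<Longrightarrow> tyC G c Om Dl"
| C_le: "tyC G c s Dl \<Longrightarrow> leC s t \<Longrightarrow> tyC G c t Dl"

fun tR :: "'r::complete_lattice kel ty \<Rightarrow> 'r set" where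
  "tR (Psi a) = {r. Rep_kel a \<le> r}"
| "tR Om = UNIV"
| "tR (And s t) = tR s \<inter> tR t"
| "tR (Arr k r) = {}"
| "tR (Times d k) = {}"

fun tD :: "('d::complete_lattice \<Rightarrow> 'c::complete_lattice \<Rightarrow> 'r::complete_lattice)
      \<Rightarrow> ('c \<Rightarrow> 'd \<times> 'c) \<Rightarrow> 'r kel ty \<Rightarrow> 'd set"
and tC :: "('d::complete_lattice \<Rightarrow> 'c::complete_lattice \<Rightarrow> 'r::complete_lattice)
      \<Rightarrow> ('c \<Rightarrow> 'd \<times> 'c) \<Rightarrow> 'r kel ty \<Rightarrow> 'c set" where
  "tD app unpr (Psi a) = {d. \<forall>k. app d k \<in> tR (Psi a)}"
| "tD app unpr Om = UNIV"
| "tD app unpr (And s t) = tD app unpr s \<inter> tD app unpr t"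
| "tD app unpr (Arr k r) = {d. \<forall>c\<in>tC app unpr k. app d c \<in> tR r}"
| "tD app unpr (Times d k) = {}"
| "tC app unpr (Psi a) = {}"
| "tC app unpr Om = UNIV"
| "tC app unpr (And s t) = tC app unpr s \<inter> tC app unpr t"
| "tC app unpr (Arr k r) = {}"
| "tC app unpr (Times d k) =
     {c. fst (unpr c) \<in> tD app unpr d \<and> snd (unpr c) \<in> tC app unpr k}"

definition sat :: "('d::complete_lattice \<Rightarrow> 'c::complete_lattice \<Rightarrow> 'r::complete_lattice)
      \<Rightarrow> ('c \<Rightarrow> 'd \<times> 'c) \<Rightarrow> (var \<Rightarrow> 'd) \<Rightarrow> (name \<Rightarrow> 'c)
      \<Rightarrow> (var \<rightharpoonup> 'r kel ty) \<Rightarrow> (name \<rightharpoonup> 'r kel ty) \<Rightarrow> bool" where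
  "sat app unpr ex ea G Dl \<longleftrightarrow>
     (\<forall>x. ex x \<in> tD app unpr (look G x)) \<and> (\<forall>\<alpha>. ea \<alpha> \<in> tC app unpr (look Dl \<alpha>))"

definition validT where
  "validT app lam pr unpr G M s Dl \<longleftrightarrow>
     (\<forall>ex ea. sat app unpr ex ea G Dl \<longrightarrow> semT app lam pr unpr ex ea M \<in> tD app unpr s)"

definition validC where
  "validC app lam pr unpr G c s Dl \<longleftrightarrow>
     (\<forall>ex ea. sat app unpr ex ea G Dl \<longrightarrow> semC app lam pr unpr ex ea c \<in> tC app unpr s)"

end

theory Submission
  imports Defs
begin

text \<open>Subtyping is sound because
  every subtyping axiom is an inclusion of interpretations. For the rules (Abs), (App) and
  (\<mu>) the interpretation of the term is \<open>lam f\<close> for some \<open>f : C \<rightarrow> R\<close>, and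
  the type constrains \<open>app (lam f)\<close>; since \<open>app (lam f) = f\<close> holds as soon as \<open>f\<close> is
  Scott continuous, the main work is to show that the interpretation of every term and
  command depends Scott continuously on the environment. Only continuity of the structure
  maps and the equations \<open>app (lam f) = f\<close>, \<open>unpr (pr p) = p\<close> are used.\<close>

lemma scott_cont_mono:
  assumes "scott_cont f"
  shows "mono f"
proof (rule monoI)
  fix x y :: 'a
  assume xy: "x \<le> y"
  have "directed {x, y}"
    unfolding directed_def using xy by auto
  then have "f (Sup {x, y}) = Sup (f ` {x, y})"
    using assms unfolding scott_cont_def by blast
  with xy have "f y = sup (f x) (f y)"
    by (simp add: sup_absorb2)
  then show "f x \<le> f y"
    by (metis sup.cobounded1)
qed

lemma directed_image:
  assumes "directed S" and "mono f"
  shows "directed (f ` S)"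
  using assms unfolding directed_def by (auto dest: monoD) (meson monoD)

lemma scott_cont_comp:
  fixes f :: "'b::complete_lattice \<Rightarrow> 'c::complete_lattice" and g :: "'a::complete_lattice \<Rightarrow> 'b"
  assumes "scott_cont f" and "scott_cont g"
  shows "scott_cont (\<lambda>x. f (g x))"
  unfolding scott_cont_def
proof (intro allI impI)
  fix S :: "'a set" assume S: "directed S"
  have "g (Sup S) = Sup (g ` S)"
    using assms(2) S unfolding scott_cont_def by blast
  moreover have "directed (g ` S)"
    using S scott_cont_mono[OF assms(2)] by (rule directed_image)
  ultimately show "f (g (Sup S)) = Sup ((\<lambda>x. f (g x)) ` S)"
    using assms(1) unfolding scott_cont_def by (simp add: image_image)
qed

lemma scott_cont_const: "scott_cont (\<lambda>x. c)"
  unfolding scott_cont_def directed_def by auto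

lemma scott_cont_id: "scott_cont (\<lambda>x. x)"
  unfolding scott_cont_def by simp

lemma scott_cont_fst: "scott_cont fst"
  unfolding scott_cont_def by (simp add: fst_Sup)

lemma scott_cont_snd: "scott_cont snd"
  unfolding scott_cont_def by (simp add: snd_Sup)

lemma scott_cont_Pair:
  assumes "scott_cont f" and "scott_cont g"
  shows "scott_cont (\<lambda>x. (f x, g x))"
  using assms unfolding scott_cont_def
  by (auto intro!: prod_eqI simp: fst_Sup snd_Sup image_image)

lemma scott_cont_fun_apply:
  assumes "scott_cont f"
  shows "scott_cont (\<lambda>x. f x i)"
  using assms unfolding scott_cont_def by (simp add: image_image)

lemma scott_cont_fun:
  assumes "\<And>i. scott_cont (\<lambda>x. f x i)"
  shows "scott_cont f"
  using assms unfolding scott_cont_def by (auto simp: image_image)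

lemma scott_cont_fun_upd:
  assumes "scott_cont f" and "scott_cont g"
  shows "scott_cont (\<lambda>x. (f x)(i := g x))"
proof (rule scott_cont_fun)
  fix j
  show "scott_cont (\<lambda>x. ((f x)(i := g x)) j)"
    using scott_cont_fun_apply[OF assms(1)] assms(2) by (cases "j = i") auto
qed

text \<open>Separate continuity implies joint continuity: a directed sup over \<open>S \<times> S\<close> can be
  read off its diagonal.\<close>
lemma scott_cont_curried_apply:
  fixes h :: "'d::complete_lattice \<Rightarrow> 'c::complete_lattice \<Rightarrow> 'r::complete_lattice"
    and f :: "'a::complete_lattice \<Rightarrow> 'd" and g :: "'a \<Rightarrow> 'c"
  assumes h: "scott_cont h" and h_arg: "\<And>d. scott_cont (h d)"
    and f: "scott_cont f" and g: "scott_cont g"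
  shows "scott_cont (\<lambda>x. h (f x) (g x))"
  unfolding scott_cont_def
proof (intro allI impI)
  fix S :: "'a set" assume S: "directed S"
  have "directed (f ` S)" and "directed (g ` S)"
    using S f g by (auto intro: directed_image scott_cont_mono)
  then have "h (f (Sup S)) (g (Sup S)) = (SUP x\<in>S. SUP y\<in>S. h (f x) (g y))"
    using f g h h_arg S unfolding scott_cont_def by (simp add: image_image)
  also have "\<dots> = (SUP x\<in>S. h (f x) (g x))"
  proof (rule antisym)
    show "(SUP x\<in>S. SUP y\<in>S. h (f x) (g y)) \<le> (SUP x\<in>S. h (f x) (g x))"
    proof (intro SUP_least)
      fix x y assume "x \<in> S" "y \<in> S"
      then obtain z where z: "z \<in> S" "x \<le> z" "y \<le> z"
        using S unfolding directed_def by blast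
      have "h (f x) (g y) \<le> h (f z) (g y)"
        using monoD[OF scott_cont_mono[OF h] monoD[OF scott_cont_mono[OF f] z(2)]]
        by (simp add: le_fun_def)
      also have "\<dots> \<le> h (f z) (g z)"
        using monoD[OF scott_cont_mono[OF h_arg] monoD[OF scott_cont_mono[OF g] z(3)]] .
      also have "\<dots> \<le> (SUP x\<in>S. h (f x) (g x))"
        using z(1) by (rule SUP_upper)
      finally show "h (f x) (g y) \<le> (SUP x\<in>S. h (f x) (g x))" .
    qed
    show "(SUP x\<in>S. h (f x) (g x)) \<le> (SUP x\<in>S. SUP y\<in>S. h (f x) (g y))"
      by (intro SUP_least SUP_upper2) auto
  qed
  finally show "h (f (Sup S)) (g (Sup S)) = Sup ((\<lambda>x. h (f x) (g x)) ` S)"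
    by simp
qed

lemma scott_cont_on_comp_curry:
  fixes L :: "('c::complete_lattice \<Rightarrow> 'r::complete_lattice) \<Rightarrow> 'd::complete_lattice"
    and H :: "'a::complete_lattice \<Rightarrow> 'c \<Rightarrow> 'r"
  assumes L: "scott_cont_on {f. scott_cont f} L"
    and H: "scott_cont (\<lambda>p. H (fst p) (snd p))"
  shows "scott_cont (\<lambda>x. L (H x))"
  unfolding scott_cont_def
proof (intro allI impI)
  fix S :: "'a set" assume S: "directed S"
  have H_arg: "scott_cont (H x)" for x
    using scott_cont_comp[OF H scott_cont_Pair[OF scott_cont_const scott_cont_id]] by simp
  have H_cont: "scott_cont H"
    by (rule scott_cont_fun)
      (use scott_cont_comp[OF H scott_cont_Pair[OF scott_cont_id scott_cont_const]] in simp)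
  then have "directed (H ` S)"
    using S scott_cont_mono directed_image by blast
  moreover have "H (Sup S) = Sup (H ` S)"
    using H_cont S unfolding scott_cont_def by blast
  moreover have "H ` S \<subseteq> {f. scott_cont f}"
    using H_arg by auto
  ultimately show "L (H (Sup S)) = Sup ((\<lambda>x. L (H x)) ` S)"
    using L unfolding scott_cont_on_def by (simp add: image_image)
qed

subsection \<open>Continuity of the interpretation\<close>

locale cont_lm_structure =
  fixes app :: "'d::complete_lattice \<Rightarrow> 'c::complete_lattice \<Rightarrow> 'r::complete_lattice"
    and lam :: "('c \<Rightarrow> 'r) \<Rightarrow> 'd"
    and pr :: "'d \<times> 'c \<Rightarrow> 'c"
    and unpr :: "'c \<Rightarrow> 'd \<times> 'c"
  assumes scott_cont_app: "scott_cont app"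
    and scott_cont_app_arg: "scott_cont (app d)"
    and scott_cont_on_lam: "scott_cont_on {f. scott_cont f} lam"
    and scott_cont_pr: "scott_cont pr"
    and scott_cont_unpr: "scott_cont unpr"
begin

abbreviation "sem \<equiv> semT app lam pr unpr"
abbreviation "semc \<equiv> semC app lam pr unpr"

lemmas scott_cont_intros =
  scott_cont_Pair scott_cont_fun_upd scott_cont_const scott_cont_id scott_cont_fst scott_cont_snd
  scott_cont_comp[OF scott_cont_fst] scott_cont_comp[OF scott_cont_snd]
  scott_cont_comp[OF scott_cont_pr] scott_cont_comp[OF scott_cont_unpr]
  scott_cont_curried_apply[OF scott_cont_app scott_cont_app_arg]

lemma scott_cont_app_split:
  assumes "scott_cont h"
  shows "scott_cont (\<lambda>x. app (fst (h x)) (snd (h x)))"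
  using scott_cont_comp[OF scott_cont_fst assms] scott_cont_comp[OF scott_cont_snd assms]
  by (rule scott_cont_curried_apply[OF scott_cont_app scott_cont_app_arg])

lemma scott_cont_sem_env:
  "scott_cont (\<lambda>E. sem (fst E) (snd E) M)"
  "scott_cont (\<lambda>E. semc (fst E) (snd E) c)"
proof (induct M and c)
  case (Var x)
  show ?case
    using scott_cont_fun_apply[OF scott_cont_fst] by simp
next
  case (Lam x M)
  have "scott_cont (\<lambda>p. (\<lambda>E. sem (fst E) (snd E) M)
          ((fst (fst p))(x := fst (unpr (snd p))), snd (fst p)))"
    by (intro scott_cont_comp[OF Lam] scott_cont_intros)
  then have "scott_cont (\<lambda>p. app (sem ((fst (fst p))(x := fst (unpr (snd p)))) (snd (fst p)) M)
          (snd (unpr (snd p))))"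
    by (intro scott_cont_intros) (auto intro: scott_cont_intros)
  then show ?case
    by (simp add: scott_cont_on_comp_curry[OF scott_cont_on_lam])
next
  case (App M N)
  have "scott_cont (\<lambda>p. app (sem (fst (fst p)) (snd (fst p)) M)
          (pr (sem (fst (fst p)) (snd (fst p)) N, snd p)))"
    using scott_cont_comp[OF App(1) scott_cont_fst] scott_cont_comp[OF App(2) scott_cont_fst]
    by (intro scott_cont_intros) simp_all
  then show ?case
    by (simp add: scott_cont_on_comp_curry[OF scott_cont_on_lam])
next
  case (Mu \<alpha> c)
  have "scott_cont (\<lambda>p. (\<lambda>E. semc (fst E) (snd E) c) (fst (fst p), (snd (fst p))(\<alpha> := snd p)))"
    by (intro scott_cont_comp[OF Mu] scott_cont_intros)
  then have "scott_cont (\<lambda>p. unpr (semc (fst (fst p)) ((snd (fst p))(\<alpha> := snd p)) c))"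
    by (intro scott_cont_intros) simp
  then have "scott_cont (\<lambda>p. app (fst (unpr (semc (fst (fst p)) ((snd (fst p))(\<alpha> := snd p)) c)))
          (snd (unpr (semc (fst (fst p)) ((snd (fst p))(\<alpha> := snd p)) c))))"
    by (rule scott_cont_app_split)
  then show ?case
    by (simp add: scott_cont_on_comp_curry[OF scott_cont_on_lam])
next
  case (Cmd \<alpha> M)
  show ?case
    using scott_cont_comp[OF scott_cont_pr scott_cont_Pair[OF Cmd
          scott_cont_fun_apply[OF scott_cont_snd, of \<alpha>]]] by simp
qed

lemma scott_cont_sem:
  assumes "scott_cont F" and "scott_cont G"
  shows "scott_cont (\<lambda>x. sem (F x) (G x) M)"
    and "scott_cont (\<lambda>x. semc (F x) (G x) c)"
  using scott_cont_comp[OF scott_cont_sem_env(1) scott_cont_Pair[OF assms]]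
    scott_cont_comp[OF scott_cont_sem_env(2) scott_cont_Pair[OF assms]]
  by simp_all

end

locale lm_structure = cont_lm_structure +
  assumes app_lam: "scott_cont f \<Longrightarrow> app (lam f) = f"
    and unpr_pr: "unpr (pr p) = p"
begin

lemma app_sem_Lam:
  "app (sem ex ea (Lam x M)) k = app (sem (ex(x := fst (unpr k))) ea M) (snd (unpr k))"
proof -
  have "scott_cont (\<lambda>k. app (sem (ex(x := fst (unpr k))) ea M) (snd (unpr k)))"
    by (intro scott_cont_intros scott_cont_sem)
  then show ?thesis
    by (simp add: app_lam)
qed

lemma app_sem_App:
  "app (sem ex ea (App M N)) k = app (sem ex ea M) (pr (sem ex ea N, k))"
proof -
  have "scott_cont (\<lambda>k. app (sem ex ea M) (pr (sem ex ea N, k)))"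
    by (intro scott_cont_intros)
  then show ?thesis
    by (simp add: app_lam)
qed

lemma app_sem_Mu:
  "app (sem ex ea (Mu \<alpha> c)) k =
     app (fst (unpr (semc ex (ea(\<alpha> := k)) c))) (snd (unpr (semc ex (ea(\<alpha> := k)) c)))"
proof -
  have "scott_cont (\<lambda>k. unpr (semc ex (ea(\<alpha> := k)) c))"
    by (intro scott_cont_intros scott_cont_sem)
  then have "scott_cont (\<lambda>k. app (fst (unpr (semc ex (ea(\<alpha> := k)) c)))
                              (snd (unpr (semc ex (ea(\<alpha> := k)) c))))"
    by (rule scott_cont_app_split)
  then show ?thesis
    by (simp add: app_lam)
qed

end

lemma lm_model_imp_lm_structure:
  assumes "lm_model app lam pr unpr"
  shows "lm_structure app lam pr unpr"
  using assms unfolding lm_model_def lm_structure_def lm_structure_axioms_def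
    cont_lm_structure_def by auto

lemma leR_isR: "leR s t \<Longrightarrow> isR s \<and> isR t"
  by (induct rule: leR.induct) auto

lemma tR_mono: "leR s t \<Longrightarrow> tR s \<subseteq> tR t"
  by (induct rule: leR.induct) auto

lemma tD_isR: "isR r \<Longrightarrow> tD app unpr r = {d. \<forall>k. app d k \<in> tR r}"
  by (induct r) auto

lemma tD_tC_mono:
  "leD s t \<Longrightarrow> tD app unpr s \<subseteq> tD app unpr t"
  "leC s t \<Longrightarrow> tC app unpr s \<subseteq> tC app unpr t"
proof (induct rule: leD_leC.inducts)
  case (D_R r1 r2)
  then have "isR r1" "isR r2" "tR r1 \<subseteq> tR r2"
    using leR_isR tR_mono by blast+
  then show ?case
    by (auto simp: tD_isR)
next
  case (D_arr k2 k1 r1 r2)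
  then show ?case
    using tR_mono by fastforce
qed auto

lemma look_upd_None: "look (G(x := None)) y = (if y = x then Om else look G y)"
  by (simp add: look_def)

lemma sat_upd_var:
  assumes "sat app unpr ex ea (G(x := None)) Dl" and "d \<in> tD app unpr (look G x)"
  shows "sat app unpr (ex(x := d)) ea G Dl"
  using assms unfolding sat_def by (auto simp: look_upd_None split: if_splits)

lemma sat_upd_name:
  assumes "sat app unpr ex ea G (Dl(\<alpha> := None))" and "k \<in> tC app unpr (look Dl \<alpha>)"
  shows "sat app unpr ex (ea(\<alpha> := k)) G Dl"
  using assms unfolding sat_def by (auto simp: look_upd_None split: if_splits)

context lm_structure
begin

theorem type_assignment_sound:
  "tyT G M s Dl \<Longrightarrow> validT app lam pr unpr G M s Dl"
  "tyC G c s Dl \<Longrightarrow> validC app lam pr unpr G c s Dl"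
proof (induct rule: tyT_tyC.inducts)
  case (T_ax G Dl x d)
  then show ?case
    unfolding validT_def sat_def look_def by (metis option.case(2) semT.simps(1))
next
  case (T_abs G M k r Dl x d)
  show ?case
    unfolding validT_def
  proof (intro allI impI)
    fix ex ea assume "sat app unpr ex ea (G(x := None)) Dl"
    then have "sat app unpr (ex(x := fst (unpr c))) ea G Dl"
      if "c \<in> tC app unpr (Times d k)" for c
      using that T_abs(3) by (auto intro: sat_upd_var)
    with T_abs(2) show "sem ex ea (Lam x M) \<in> tD app unpr (Arr (Times d k) r)"
      unfolding validT_def by (auto simp: app_sem_Lam simp del: semT.simps)
  qed
next
  case (T_app G M d k r Dl N)
  then show ?case
    unfolding validT_def by (auto simp: app_sem_App unpr_pr simp del: semT.simps)
next
  case (T_mu G c k' r Dl \<alpha> k)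
  show ?case
    unfolding validT_def
  proof (intro allI impI)
    fix ex ea assume "sat app unpr ex ea G (Dl(\<alpha> := None))"
    then have "sat app unpr ex (ea(\<alpha> := c0)) G Dl" if "c0 \<in> tC app unpr k" for c0
      using that T_mu(3) by (auto intro: sat_upd_name)
    with T_mu(2) show "sem ex ea (Mu \<alpha> c) \<in> tD app unpr (Arr k r)"
      unfolding validC_def by (auto simp: app_sem_Mu simp del: semT.simps)
  qed
next
  case (T_le G M s Dl t)
  then show ?case
    unfolding validT_def using tD_tC_mono(1) by blast
next
  case (C_cmd G M d Dl \<alpha> k)
  then show ?case
    unfolding validT_def validC_def sat_def by (auto simp: unpr_pr)
next
  case (C_le G c s Dl t)
  then show ?case
    unfolding validC_def using tD_tC_mono(2) by blast
qed (auto simp: validT_def validC_def)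

end

theorem theorem4p16:
  fixes app :: "'d::complete_lattice \<Rightarrow> 'c::complete_lattice \<Rightarrow> 'r::complete_lattice"
    and lam :: "('c \<Rightarrow> 'r) \<Rightarrow> 'd"
    and pr :: "'d \<times> 'c \<Rightarrow> 'c"
    and unpr :: "'c \<Rightarrow> 'd \<times> 'c"
  assumes "lm_model app lam pr unpr"
  shows "(\<forall>G M s Dl. tyT G M s Dl \<longrightarrow> validT app lam pr unpr G M s Dl)
       \<and> (\<forall>G c s Dl. tyC G c s Dl \<longrightarrow> validC app lam pr unpr G c s Dl)"
proof -
  interpret lm_structure app lam pr unpr
    using assms by (rule lm_model_imp_lm_structure)
  show ?thesis
    using type_assignment_sound by blast
qed

end
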